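(* Under the standing assumptions below, let $\rho>0$, $\epsilon>0$, and let $(x_\epsilon,y_\epsilon,\lambda_\epsilon,z_\epsilon)\in\mathcal X\times\mathcal Y\times\Lambda\times\mathcal Y$ be an $\epsilon$-optimal solution of the min-max-min problem $\min_{x\in\mathcal X}\max_{y\in\mathcal Y,\lambda\in\Lambda}\min_{z\in\mathcal Y}P_\rho(x,y,\lambda,z)$. Then $$\Phi(x_\epsilon)\le\Phi_\rho^*+2\epsilon+\delta_\rho(x_\epsilon),\qquad f(x_\epsilon,y_\epsilon,\lambda_\epsilon)\ge\Phi^*-2\epsilon-\delta_\rho(x_\epsilon),$$ $$g(y_\epsilon,\lambda_\epsilon)-\min_{z\in\mathcal Y}g(z,\lambda_\epsilon)\le\rho^{-1}\big(f_{\rm hi}-\Phi^*+2\epsilon+\delta_\rho(x_\epsilon)\big).$$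
   Context: Standing setting. $\mathcal X\subset\mathbb R^{d_x}$, $\mathcal Y\subset\mathbb R^{d_y}$, $\Lambda\subset\mathbb R^{d_\lambda}$ are nonempty convex compact sets. $\bar f:\mathbb R^{d_x}\times\mathbb R^{d_y}\to\mathbb R$ is continuously differentiable with $\nabla\bar f$ Lipschitz on $\mathcal X\times\mathcal Y$; $A\in\mathbb R^{d_\lambda\times d_x}$, $B\in\mathbb R^{d_\lambda\times d_y}$, $c\in\mathbb R^{d_\lambda}$, and $f(x,y,\lambda):=\bar f(x,y)+\lambda^T(Ax+By-c)$. $g:\mathbb R^{d_y}\times\mathbb R^{d_\lambda}\to\mathbb R$ is continuously differentiable with $\nabla g$ Lipschitz on $\mathcal Y\times\Lambda$, and $g(\cdot,\lambda)$ is convex for each $\lambda\in\Lambda$. Definitions: $f_{\rm hi}:=\max_{\mathcal X\times\mathcal Y\times\Lambda}f$; $\mathcal F_{\rm low}:=\{(y,\lambda)\in\mathcal Y\times\Lambda:\ g(y,\lambda)=\min_{z\in\mathcal Y}g(z,\lambda)\}$; $h_g(y,\lambda):=g(y,\lambda)-\min_{z\in\mathcal Y}g(z,\lambda)$; $P_\rho(x,y,\lambda,z):=f(x,y,\lambda)-\rho(g(y,\lambda)-g(z,\lambda))$; $\Psi_\rho(x,y,\lambda):=\min_{z\in\mathcal Y}P_\rho(x,y,\lambda,z)$; $F_\rho(x):=\max_{y\in\mathcal Y,\lambda\in\Lambda}\Psi_\rho(x,y,\lambda)$; $\Phi_\rho^*:=\min_{x\in\mathcal X}F_\rho(x)$;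 $\Phi(x):=\max_{(y,\lambda)\in\mathcal F_{\rm low}}f(x,y,\lambda)$; $\Phi^*:=\min_{x\in\mathcal X}\Phi(x)$; $\delta_\rho(x):=|F_\rho(x)-\Phi(x)|$. A point $(x_\epsilon,y_\epsilon,\lambda_\epsilon,z_\epsilon)\in\mathcal X\times\mathcal Y\times\Lambda\times\mathcal Y$ is an $\epsilon$-optimal solution of $\min_{x}\max_{y,\lambda}\min_{z}P_\rho$ if (i) $P_\rho(x_\epsilon,y_\epsilon,\lambda_\epsilon,z_\epsilon)-\min_{z\in\mathcal Y}P_\rho(x_\epsilon,y_\epsilon,\lambda_\epsilon,z)\le\epsilon$, (ii) $\max_{y\in\mathcal Y,\lambda\in\Lambda}\min_{z\in\mathcal Y}P_\rho(x_\epsilon,y,\lambda,z)-P_\rho(x_\epsilon,y_\epsilon,\lambda_\epsilon,z_\epsilon)\le\epsilon$, (iii) $P_\rho(x_\epsilon,y_\epsilon,\lambda_\epsilon,z_\epsilon)-\Phi_\rho^*\le\epsilon$. *)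

theory Defs
  imports "HOL-Analysis.Analysis"
begin

definition C1_lipgrad :: "('a::euclidean_space \<Rightarrow> real) \<Rightarrow> 'a set \<Rightarrow> bool" where
  "C1_lipgrad F S \<longleftrightarrow>
     (\<exists>grad :: 'a \<Rightarrow> 'a.
        (\<forall>p. (F has_derivative (\<lambda>h. grad p \<bullet> h)) (at p)) \<and>
        continuous_on UNIV grad \<and>
        (\<exists>K. K-lipschitz_on S grad))"

definition f_fun ::
  "(real^'dx \<Rightarrow> real^'dy \<Rightarrow> real) \<Rightarrow> real^'dx^'dl \<Rightarrow> real^'dy^'dl \<Rightarrow> real^'dl
     \<Rightarrow> real^'dx \<Rightarrow> real^'dy \<Rightarrow> real^'dl \<Rightarrow> real" where
  "f_fun fbar A B c x y l = fbar x y + l \<bullet> (A *v x + B *v y - c)"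

definition f_hi :: "('x \<Rightarrow> 'y \<Rightarrow> 'l \<Rightarrow> real) \<Rightarrow> 'x set \<Rightarrow> 'y set \<Rightarrow> 'l set \<Rightarrow> real" where
  "f_hi f X Y L = Sup ((\<lambda>(x,y,l). f x y l) ` (X \<times> Y \<times> L))"

definition gmin :: "('y \<Rightarrow> 'l \<Rightarrow> real) \<Rightarrow> 'y set \<Rightarrow> 'l \<Rightarrow> real" where
  "gmin g Y l = Inf ((\<lambda>z. g z l) ` Y)"

definition F_low :: "('y \<Rightarrow> 'l \<Rightarrow> real) \<Rightarrow> 'y set \<Rightarrow> 'l set \<Rightarrow> ('y \<times> 'l) set" where
  "F_low g Y L = {(y,l). y \<in> Y \<and> l \<in> L \<and> g y l = gmin g Y l}"

definition h_g :: "('y \<Rightarrow> 'l \<Rightarrow> real) \<Rightarrow> 'y set \<Rightarrow> 'y \<Rightarrow> 'l \<Rightarrow> real" where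
  "h_g g Y y l = g y l - gmin g Y l"

definition P_rho :: "real \<Rightarrow> ('x \<Rightarrow> 'y \<Rightarrow> 'l \<Rightarrow> real) \<Rightarrow> ('y \<Rightarrow> 'l \<Rightarrow> real)
     \<Rightarrow> 'x \<Rightarrow> 'y \<Rightarrow> 'l \<Rightarrow> 'y \<Rightarrow> real" where
  "P_rho \<rho> f g x y l z = f x y l - \<rho> * (g y l - g z l)"

definition Psi_rho :: "real \<Rightarrow> ('x \<Rightarrow> 'y \<Rightarrow> 'l \<Rightarrow> real) \<Rightarrow> ('y \<Rightarrow> 'l \<Rightarrow> real) \<Rightarrow> 'y set
     \<Rightarrow> 'x \<Rightarrow> 'y \<Rightarrow> 'l \<Rightarrow> real" where
  "Psi_rho \<rho> f g Y x y l = Inf ((\<lambda>z. P_rho \<rho> f g x y l z) ` Y)"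

definition F_rho :: "real \<Rightarrow> ('x \<Rightarrow> 'y \<Rightarrow> 'l \<Rightarrow> real) \<Rightarrow> ('y \<Rightarrow> 'l \<Rightarrow> real) \<Rightarrow> 'y set \<Rightarrow> 'l set
     \<Rightarrow> 'x \<Rightarrow> real" where
  "F_rho \<rho> f g Y L x = Sup ((\<lambda>(y,l). Psi_rho \<rho> f g Y x y l) ` (Y \<times> L))"

definition Phi_rho_star :: "real \<Rightarrow> ('x \<Rightarrow> 'y \<Rightarrow> 'l \<Rightarrow> real) \<Rightarrow> ('y \<Rightarrow> 'l \<Rightarrow> real)
     \<Rightarrow> 'x set \<Rightarrow> 'y set \<Rightarrow> 'l set \<Rightarrow> real" where
  "Phi_rho_star \<rho> f g X Y L = Inf (F_rho \<rho> f g Y L ` X)"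

definition Phi :: "('x \<Rightarrow> 'y \<Rightarrow> 'l \<Rightarrow> real) \<Rightarrow> ('y \<Rightarrow> 'l \<Rightarrow> real) \<Rightarrow> 'y set \<Rightarrow> 'l set \<Rightarrow> 'x \<Rightarrow> real" where
  "Phi f g Y L x = Sup ((\<lambda>(y,l). f x y l) ` F_low g Y L)"

definition Phi_star :: "('x \<Rightarrow> 'y \<Rightarrow> 'l \<Rightarrow> real) \<Rightarrow> ('y \<Rightarrow> 'l \<Rightarrow> real)
     \<Rightarrow> 'x set \<Rightarrow> 'y set \<Rightarrow> 'l set \<Rightarrow> real" where
  "Phi_star f g X Y L = Inf (Phi f g Y L ` X)"

definition delta_rho :: "real \<Rightarrow> ('x \<Rightarrow> 'y \<Rightarrow> 'l \<Rightarrow> real) \<Rightarrow> ('y \<Rightarrow> 'l \<Rightarrow> real)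
     \<Rightarrow> 'y set \<Rightarrow> 'l set \<Rightarrow> 'x \<Rightarrow> real" where
  "delta_rho \<rho> f g Y L x = \<bar>F_rho \<rho> f g Y L x - Phi f g Y L x\<bar>"

definition eps_optimal :: "real \<Rightarrow> real \<Rightarrow> ('x \<Rightarrow> 'y \<Rightarrow> 'l \<Rightarrow> real) \<Rightarrow> ('y \<Rightarrow> 'l \<Rightarrow> real)
     \<Rightarrow> 'x set \<Rightarrow> 'y set \<Rightarrow> 'l set \<Rightarrow> 'x \<Rightarrow> 'y \<Rightarrow> 'l \<Rightarrow> 'y \<Rightarrow> bool" where
  "eps_optimal \<epsilon> \<rho> f g X Y L xe ye le ze \<longleftrightarrow>
     xe \<in> X \<and> ye \<in> Y \<and> le \<in> L \<and> ze \<in> Y \<and>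
     P_rho \<rho> f g xe ye le ze - Inf ((\<lambda>z. P_rho \<rho> f g xe ye le z) ` Y) \<le> \<epsilon> \<and>
     Sup ((\<lambda>(y,l). Inf ((\<lambda>z. P_rho \<rho> f g xe y l z) ` Y)) ` (Y \<times> L))
       - P_rho \<rho> f g xe ye le ze \<le> \<epsilon> \<and>
     P_rho \<rho> f g xe ye le ze - Phi_rho_star \<rho> f g X Y L \<le> \<epsilon>"

end

theory Submission
  imports Defs
begin

(* Minimising P_rho over z gives the closed form
   Psi_rho(x,y,lambda) = f(x,y,lambda) - rho h_g(y,lambda).  Conditions (i) and (ii) of
   epsilon-optimality place Psi_rho(x_eps,y_eps,lambda_eps) at most 2 epsilon below
   F_rho(x_eps), which differs from Phi(x_eps) by at most delta_rho(x_eps); combined with (iii),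
   Phi* <= Phi(x_eps), h_g >= 0 and f <= f_hi this gives the three bounds. *)

lemma gmin_eq_minimum:
  assumes "z0 \<in> Y" "\<And>z. z \<in> Y \<Longrightarrow> g z0 l \<le> g z l"
  shows "gmin g Y l = g z0 l"
  unfolding gmin_def using assms by (intro cInf_eq_minimum) auto

lemma h_g_nonneg:
  assumes "y \<in> Y" "z0 \<in> Y" "\<And>z. z \<in> Y \<Longrightarrow> g z0 l \<le> g z l"
  shows "0 \<le> h_g g Y y l"
  using assms by (simp add: h_g_def gmin_eq_minimum)

lemma minimizer_in_F_low:
  assumes "z0 \<in> Y" "l \<in> L" "\<And>z. z \<in> Y \<Longrightarrow> g z0 l \<le> g z l"
  shows "(z0, l) \<in> F_low g Y L"
  using assms by (simp add: F_low_def gmin_eq_minimum)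

lemma Psi_rho_eq_h_g:
  assumes "z0 \<in> Y" "\<And>z. z \<in> Y \<Longrightarrow> g z0 l \<le> g z l" "\<rho> \<ge> 0"
  shows "Psi_rho \<rho> f g Y x y l = f x y l - \<rho> * h_g g Y y l"
proof -
  have "Psi_rho \<rho> f g Y x y l = P_rho \<rho> f g x y l z0"
    unfolding Psi_rho_def
  proof (rule cInf_eq_minimum)
    show "P_rho \<rho> f g x y l z0 \<in> (\<lambda>z. P_rho \<rho> f g x y l z) ` Y"
      using assms(1) by blast
  next
    fix p assume "p \<in> (\<lambda>z. P_rho \<rho> f g x y l z) ` Y"
    then obtain z where "z \<in> Y" "p = P_rho \<rho> f g x y l z" by blast
    then show "P_rho \<rho> f g x y l z0 \<le> p"
      using assms(2)[of z] \<open>\<rho> \<ge> 0\<close> by (simp add: P_rho_def mult_left_mono)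
  qed
  also have "\<dots> = f x y l - \<rho> * h_g g Y y l"
    using assms by (simp add: P_rho_def h_g_def gmin_eq_minimum)
  finally show ?thesis .
qed

lemma Phi_star_le_Phi:
  assumes "x \<in> X" "F_low g Y L \<noteq> {}"
    and bound: "\<And>x y l. x \<in> X \<Longrightarrow> y \<in> Y \<Longrightarrow> l \<in> L \<Longrightarrow> \<bar>f x y l\<bar> \<le> M"
  shows "Phi_star f g X Y L \<le> Phi f g Y L x"
proof -
  obtain y0 l0 where yl0: "(y0, l0) \<in> F_low g Y L"
    using assms(2) by auto
  have "- M \<le> Phi f g Y L x'" if "x' \<in> X" for x'
  proof -
    have "bdd_above ((\<lambda>(y, l). f x' y l) ` F_low g Y L)"
      using bound[OF that] unfolding bdd_above_def F_low_def by (auto dest: abs_le_D1)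
    then have "f x' y0 l0 \<le> Phi f g Y L x'"
      unfolding Phi_def using yl0 by (force intro: cSup_upper)
    moreover have "- M \<le> f x' y0 l0"
      using bound[OF that, of y0 l0] yl0 unfolding F_low_def by simp
    ultimately show ?thesis by linarith
  qed
  then have "bdd_below (Phi f g Y L ` X)"
    by (auto simp: bdd_below_def)
  then show ?thesis
    unfolding Phi_star_def using \<open>x \<in> X\<close> by (simp add: cInf_lower)
qed

lemma f_le_f_hi:
  assumes "x \<in> X" "y \<in> Y" "l \<in> L"
    and bound: "\<And>x y l. x \<in> X \<Longrightarrow> y \<in> Y \<Longrightarrow> l \<in> L \<Longrightarrow> f x y l \<le> M"
  shows "f x y l \<le> f_hi f X Y L"
  unfolding f_hi_def
proof (rule cSup_upper)
  show "f x y l \<in> (\<lambda>(x, y, l). f x y l) ` (X \<times> Y \<times> L)"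
    using assms(1-3) by (auto intro: image_eqI[where x = "(x, y, l)"])
  show "bdd_above ((\<lambda>(x, y, l). f x y l) ` (X \<times> Y \<times> L))"
    using bound by (auto simp: bdd_above_def)
qed

lemma eps_optimal_Phi_le:
  assumes "eps_optimal \<epsilon> \<rho> f g X Y L xe ye le ze"
  shows "Phi f g Y L xe \<le> Phi_rho_star \<rho> f g X Y L + 2 * \<epsilon> + delta_rho \<rho> f g Y L xe"
  using assms unfolding eps_optimal_def delta_rho_def F_rho_def Psi_rho_def by linarith

lemma eps_optimal_Psi_rho_ge:
  assumes "eps_optimal \<epsilon> \<rho> f g X Y L xe ye le ze"
  shows "Phi f g Y L xe - 2 * \<epsilon> - delta_rho \<rho> f g Y L xe \<le> Psi_rho \<rho> f g Y xe ye le"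
  using assms unfolding eps_optimal_def delta_rho_def F_rho_def Psi_rho_def by linarith

lemma eps_optimal_bounds:
  fixes f :: "'x \<Rightarrow> 'y \<Rightarrow> 'l \<Rightarrow> real" and g :: "'y \<Rightarrow> 'l \<Rightarrow> real"
  assumes opt: "eps_optimal \<epsilon> \<rho> f g X Y L xe ye le ze" and rho: "\<rho> > 0" and "L \<noteq> {}"
    and bound: "\<And>x y l. x \<in> X \<Longrightarrow> y \<in> Y \<Longrightarrow> l \<in> L \<Longrightarrow> \<bar>f x y l\<bar> \<le> M"
    and g_min: "\<And>l. l \<in> L \<Longrightarrow> \<exists>z0\<in>Y. \<forall>z\<in>Y. g z0 l \<le> g z l"
  shows "Phi f g Y L xe \<le> Phi_rho_star \<rho> f g X Y L + 2 * \<epsilon> + delta_rho \<rho> f g Y L xe"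
    and "f xe ye le \<ge> Phi_star f g X Y L - 2 * \<epsilon> - delta_rho \<rho> f g Y L xe"
    and "h_g g Y ye le
           \<le> (1 / \<rho>) * (f_hi f X Y L - Phi_star f g X Y L + 2 * \<epsilon> + delta_rho \<rho> f g Y L xe)"
proof -
  have xe: "xe \<in> X" and ye: "ye \<in> Y" and le: "le \<in> L"
    using opt by (simp_all add: eps_optimal_def)
  obtain l0 where l0: "l0 \<in> L"
    using \<open>L \<noteq> {}\<close> by blast
  obtain y0 where y0: "y0 \<in> Y" "\<And>z. z \<in> Y \<Longrightarrow> g y0 l0 \<le> g z l0"
    using g_min[OF l0] by blast
  have "F_low g Y L \<noteq> {}"
    using minimizer_in_F_low[where g = g, OF y0(1) l0 y0(2)] by blast
  then have Phi_star_le: "Phi_star f g X Y L \<le> Phi f g Y L xe"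
    using Phi_star_le_Phi[where f = f, OF xe _ bound] by blast
  obtain z0 where z0: "z0 \<in> Y" "\<And>z. z \<in> Y \<Longrightarrow> g z0 le \<le> g z le"
    using g_min[OF le] by blast
  have Psi_eq: "Psi_rho \<rho> f g Y xe ye le = f xe ye le - \<rho> * h_g g Y ye le"
    using Psi_rho_eq_h_g[where g = g, OF z0 less_imp_le[OF rho]] .
  have penalty_nonneg: "0 \<le> \<rho> * h_g g Y ye le"
    using h_g_nonneg[where g = g, OF ye z0] rho by simp
  have f_le: "f xe ye le \<le> f_hi f X Y L"
    using f_le_f_hi[OF xe ye le] bound abs_le_D1 by blast
  show "Phi f g Y L xe \<le> Phi_rho_star \<rho> f g X Y L + 2 * \<epsilon> + delta_rho \<rho> f g Y L xe"
    using eps_optimal_Phi_le[OF opt] .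
  show "f xe ye le \<ge> Phi_star f g X Y L - 2 * \<epsilon> - delta_rho \<rho> f g Y L xe"
    using eps_optimal_Psi_rho_ge[OF opt] Phi_star_le Psi_eq penalty_nonneg by linarith
  have "\<rho> * h_g g Y ye le \<le> f_hi f X Y L - Phi_star f g X Y L + 2 * \<epsilon> + delta_rho \<rho> f g Y L xe"
    using eps_optimal_Psi_rho_ge[OF opt] Phi_star_le Psi_eq f_le by linarith
  then show "h_g g Y ye le
      \<le> (1 / \<rho>) * (f_hi f X Y L - Phi_star f g X Y L + 2 * \<epsilon> + delta_rho \<rho> f g Y L xe)"
    using rho by (simp add: pos_le_divide_eq mult.commute)
qed

lemma C1_lipgrad_imp_continuous: "C1_lipgrad F S \<Longrightarrow> continuous_on UNIV F"
  unfolding C1_lipgrad_def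
  by (metis continuous_at_imp_continuous_on has_derivative_continuous)

lemma continuous_on_f_fun:
  assumes "continuous_on UNIV (\<lambda>p. fbar (fst p) (snd p))"
  shows "continuous_on UNIV (\<lambda>(x, y, l). f_fun fbar A B c x y l)"
proof -
  have "continuous_on UNIV (\<lambda>(x, y, l::real^'dl). fbar x y)"
    using continuous_on_compose[of UNIV "\<lambda>(x, y, l::real^'dl). (x, y)", OF _
        continuous_on_subset[OF assms]]
    by (simp add: case_prod_beta' o_def continuous_intros)
  moreover have "continuous_on UNIV (\<lambda>x. A *v x)" "continuous_on UNIV (\<lambda>y. B *v y)"
    by (simp_all add: continuous_intros)
  ultimately show ?thesis
    unfolding f_fun_def case_prod_beta'
    by (intro continuous_intros continuous_on_compose2[of UNIV "\<lambda>x. A *v x"]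
        continuous_on_compose2[of UNIV "\<lambda>y. B *v y"]) auto
qed

lemma continuous_on_compact_Times_bounded:
  assumes "compact X" "compact Y" "compact L" "continuous_on (X \<times> Y \<times> L) (\<lambda>(x, y, l). f x y l)"
  obtains M :: real where "\<And>x y l. x \<in> X \<Longrightarrow> y \<in> Y \<Longrightarrow> l \<in> L \<Longrightarrow> \<bar>f x y l\<bar> \<le> M"
proof -
  obtain M where M: "\<forall>v\<in>(\<lambda>(x, y, l). f x y l) ` (X \<times> Y \<times> L). \<bar>v\<bar> \<le> M"
    using compact_imp_bounded[OF compact_continuous_image[OF assms(4)
          compact_Times[OF assms(1) compact_Times[OF assms(2,3)]]]]
    unfolding bounded_iff real_norm_def by blast
  show thesis
  proof (rule that)
    fix x y l assume "x \<in> X" "y \<in> Y" "l \<in> L"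
    then have "f x y l \<in> (\<lambda>(x, y, l). f x y l) ` (X \<times> Y \<times> L)"
      by (intro image_eqI[where x = "(x, y, l)"]) auto
    then show "\<bar>f x y l\<bar> \<le> M"
      using M by blast
  qed
qed

lemma continuous_attains_inf_first_arg:
  fixes g :: "'a::topological_space \<Rightarrow> 'b::topological_space \<Rightarrow> 'c::linorder_topology"
  assumes "compact Y" "Y \<noteq> {}" "continuous_on UNIV (\<lambda>p. g (fst p) (snd p))"
  shows "\<exists>z0\<in>Y. \<forall>z\<in>Y. g z0 l \<le> g z l"
proof -
  have "continuous_on Y (\<lambda>z. g z l)"
    using continuous_on_compose2[OF assms(3), of Y "\<lambda>z. (z, l)"] by (simp add: continuous_intros)
  then show ?thesis
    by (rule continuous_attains_inf[OF assms(1,2)])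
qed

theorem mainTheorem2:
  fixes X :: "(real^'dx) set" and Y :: "(real^'dy) set" and Lam :: "(real^'dl) set"
    and fbar :: "real^'dx \<Rightarrow> real^'dy \<Rightarrow> real"
    and A :: "real^'dx^'dl" and B :: "real^'dy^'dl" and c :: "real^'dl"
    and g :: "real^'dy \<Rightarrow> real^'dl \<Rightarrow> real"
    and \<rho> \<epsilon> :: real
    and xe :: "real^'dx" and ye ze :: "real^'dy" and le :: "real^'dl"
  assumes X: "X \<noteq> {}" "convex X" "compact X"
    and Y: "Y \<noteq> {}" "convex Y" "compact Y"
    and Lam: "Lam \<noteq> {}" "convex Lam" "compact Lam"
    and fbar: "C1_lipgrad (\<lambda>p. fbar (fst p) (snd p)) (X \<times> Y)"
    and g_smooth: "C1_lipgrad (\<lambda>p. g (fst p) (snd p)) (Y \<times> Lam)"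
    and g_convex: "\<And>l. l \<in> Lam \<Longrightarrow> convex_on UNIV (\<lambda>y. g y l)"
    and rho: "\<rho> > 0" and eps: "\<epsilon> > 0"
    and opt: "eps_optimal \<epsilon> \<rho> (f_fun fbar A B c) g X Y Lam xe ye le ze"
  shows "(Phi (f_fun fbar A B c) g Y Lam xe
           \<le> Phi_rho_star \<rho> (f_fun fbar A B c) g X Y Lam + 2 * \<epsilon>
             + delta_rho \<rho> (f_fun fbar A B c) g Y Lam xe) \<and>
         (f_fun fbar A B c xe ye le
           \<ge> Phi_star (f_fun fbar A B c) g X Y Lam - 2 * \<epsilon>
             - delta_rho \<rho> (f_fun fbar A B c) g Y Lam xe) \<and>
         (h_g g Y ye le
           \<le> (1 / \<rho>) * (f_hi (f_fun fbar A B c) X Y Lam - Phi_star (f_fun fbar A B c) g X Y Lam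
                + 2 * \<epsilon> + delta_rho \<rho> (f_fun fbar A B c) g Y Lam xe))"
proof -
  obtain M where "\<And>x y l. x \<in> X \<Longrightarrow> y \<in> Y \<Longrightarrow> l \<in> Lam \<Longrightarrow> \<bar>f_fun fbar A B c x y l\<bar> \<le> M"
    using continuous_on_compact_Times_bounded[OF X(3) Y(3) Lam(3) continuous_on_subset[OF
          continuous_on_f_fun[of fbar A B c, OF C1_lipgrad_imp_continuous[OF fbar]] subset_UNIV]]
    by blast
  moreover have "\<exists>z0\<in>Y. \<forall>z\<in>Y. g z0 l \<le> g z l" for l
    using continuous_attains_inf_first_arg[OF Y(3) Y(1) C1_lipgrad_imp_continuous[OF g_smooth]] .
  ultimately show ?thesis
    using eps_optimal_bounds[OF opt rho Lam(1)] by blast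
qed

end
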